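(* Let $k=\mathbb R$ or $\mathbb C$, let $(E,g)$ be a finite-dimensional inner product vector space over $k$, let $f\in\operatorname{End}_k(E)$, let $H_1,\dots,H_n$ be $f$-invariant subspaces with $E=H_1\oplus\dots\oplus H_n$, and write $f_i=f|_{H_i}$. Let $\mathcal H_f^\perp=[\operatorname{Im} f_1]_1^\perp\oplus\dots\oplus[\operatorname{Im} f_n]_n^\perp$. Then $\mathcal H_f^\perp=[\operatorname{Im} f]^\perp$ if and only if $[\operatorname{Im} f_i]_i^\perp\subseteq\big[\sum_{j\ne i}\operatorname{Im} f_j\big]^\perp$ for every $i\in\{1,\dots,n\}$.
   Context: An inner product is linear in the first argument, conjugate-symmetric and positive definite. For a subspace $U\subseteq E$, $U^\perp=\{e\in E:g(u,e)=0\ \forall u\in U\}$; for a subspace $W\subseteq H_i$, $[W]_i^\perp=\{v\in H_i:g(w,v)=0\ \forall w\in W\}$. *)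

theory Defs
  imports Complex_Main "HOL-Library.FuncSet"
begin

text \<open>The scalar field k is R or C: we carry an injective ring embedding iota of k into the
complex numbers whose range is either the reals or all of C.  Conjugation on k is
transported along iota.\<close>

definition R_or_C :: "('k::field \<Rightarrow> complex) \<Rightarrow> bool" where
  "R_or_C \<iota> \<longleftrightarrow> inj \<iota> \<and> \<iota> 0 = 0 \<and> \<iota> 1 = 1
     \<and> (\<forall>a b. \<iota> (a + b) = \<iota> a + \<iota> b) \<and> (\<forall>a b. \<iota> (a * b) = \<iota> a * \<iota> b)
     \<and> (range \<iota> = \<real> \<or> range \<iota> = UNIV)"

definition is_inner_product ::
  "('k::field \<Rightarrow> complex) \<Rightarrow> ('k \<Rightarrow> 'v::ab_group_add \<Rightarrow> 'v) \<Rightarrow> ('v \<Rightarrow> 'v \<Rightarrow> 'k) \<Rightarrow> bool" where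
  "is_inner_product \<iota> scale g \<longleftrightarrow>
     (\<forall>a u v w. g (scale a u + v) w = a * g u w + g v w)
     \<and> (\<forall>u v. \<iota> (g u v) = cnj (\<iota> (g v u)))
     \<and> (\<forall>v. v \<noteq> 0 \<longrightarrow> \<iota> (g v v) \<in> \<real> \<and> Re (\<iota> (g v v)) > 0)"

definition orth :: "('v \<Rightarrow> 'v \<Rightarrow> 'k::zero) \<Rightarrow> 'v set \<Rightarrow> 'v set" where
  "orth g U = {e. \<forall>u\<in>U. g u e = 0}"

definition orth_in :: "('v \<Rightarrow> 'v \<Rightarrow> 'k::zero) \<Rightarrow> 'v set \<Rightarrow> 'v set \<Rightarrow> 'v set" where
  "orth_in g H W = {v\<in>H. \<forall>w\<in>W. g w v = 0}"

definition sumset :: "'i set \<Rightarrow> ('i \<Rightarrow> 'v::comm_monoid_add set) \<Rightarrow> 'v set" where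
  "sumset I A = {sum h I | h. h \<in> (\<Pi>\<^sub>E i\<in>I. A i)}"

definition internal_direct_sum ::
  "('k::field \<Rightarrow> 'v::ab_group_add \<Rightarrow> 'v) \<Rightarrow> 'i set \<Rightarrow> ('i \<Rightarrow> 'v set) \<Rightarrow> bool" where
  "internal_direct_sum scale I H \<longleftrightarrow>
     (\<forall>i\<in>I. module.subspace scale (H i))
     \<and> (\<forall>x. \<exists>!h. h \<in> (\<Pi>\<^sub>E i\<in>I. H i) \<and> x = sum h I)"

end

theory Submission
  imports Defs
begin

text \<open>Write \<open>K\<^sub>i\<close> for \<open>[Im f\<^sub>i]\<^sub>i\<^sup>\<perp>\<close>. Since \<open>Im f = Im f\<^sub>1 + \<dots> + Im f\<^sub>n\<close> and \<open>K\<^sub>i\<close> is orthogonal to \<open>Im f\<^sub>i\<close>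
  by construction, the condition of the theorem says exactly that every \<open>K\<^sub>i\<close> is orthogonal to
  \<open>Im f\<close>; this is clearly necessary. Conversely, orthogonal projection inside \<open>H\<^sub>i\<close> gives
  \<open>H\<^sub>i = Im f\<^sub>i + K\<^sub>i\<close>, so every vector is \<open>a + b\<close> with \<open>a \<in> Im f\<close> and \<open>b \<in> K\<^sub>1 + \<dots> + K\<^sub>n\<close>.
  If all \<open>K\<^sub>i\<close> are orthogonal to \<open>Im f\<close> and the vector is too, then \<open>a\<close> is orthogonal to itself,
  hence zero.\<close>

lemma sum_in_sumset:
  assumes "\<And>i. i \<in> I \<Longrightarrow> x i \<in> A i"
  shows "sum x I \<in> sumset I A"
proof -
  have "sum x I = sum (restrict x I) I" by (rule sum.cong) auto
  moreover have "restrict x I \<in> (\<Pi>\<^sub>E i\<in>I. A i)" using assms by auto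
  ultimately show ?thesis unfolding sumset_def by blast
qed

lemma member_sumset_single:
  assumes "finite I" "i \<in> I" "v \<in> A i" "\<And>j. j \<in> I \<Longrightarrow> 0 \<in> A j"
  shows "v \<in> sumset I A"
proof -
  have "(\<Sum>j\<in>I. if j = i then v else 0) \<in> sumset I A"
    by (rule sum_in_sumset) (use assms in auto)
  then show ?thesis using assms(1,2) by (simp add: sum.delta)
qed

lemma sumset_split:
  fixes A :: "'i \<Rightarrow> 'v::comm_monoid_add set"
  assumes "finite I" "i \<in> I" "x \<in> sumset I A"
  obtains a b where "a \<in> A i" "b \<in> sumset (I - {i}) A" "x = a + b"
proof -
  obtain h where h: "h \<in> (\<Pi>\<^sub>E j\<in>I. A j)" "x = sum h I"
    using assms(3) unfolding sumset_def by blast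
  have "x = h i + sum h (I - {i})" using h(2) sum.remove[OF assms(1,2)] by simp
  moreover have "sum h (I - {i}) \<in> sumset (I - {i}) A" by (rule sum_in_sumset) (use h(1) in auto)
  ultimately show thesis using that h(1) assms(2) by blast
qed

lemma (in module) sumset_subset_subspace:
  assumes "subspace S" "\<And>i. i \<in> I \<Longrightarrow> A i \<subseteq> S"
  shows "sumset I A \<subseteq> S"
proof
  fix x assume "x \<in> sumset I A"
  then obtain h where h: "h \<in> (\<Pi>\<^sub>E i\<in>I. A i)" "x = sum h I" unfolding sumset_def by blast
  show "x \<in> S" unfolding h(2) by (rule subspace_sum[OF assms(1)]) (use h(1) assms(2) in auto)
qed

lemma orth_antimono: "U \<subseteq> V \<Longrightarrow> orth g V \<subseteq> orth g U"
  unfolding orth_def by blast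

locale inner_product_space = vector_space scale
  for scale :: "'k::field \<Rightarrow> 'v::ab_group_add \<Rightarrow> 'v" +
  fixes \<iota> :: "'k \<Rightarrow> complex" and g :: "'v \<Rightarrow> 'v \<Rightarrow> 'k"
  assumes scalar_field: "R_or_C \<iota>"
    and inner_product: "is_inner_product \<iota> scale g"
begin

lemma embedding_eq_iff: "\<iota> a = \<iota> b \<longleftrightarrow> a = b"
  using scalar_field unfolding R_or_C_def by (auto simp: inj_eq)

lemma embedding_add: "\<iota> (a + b) = \<iota> a + \<iota> b"
  using scalar_field unfolding R_or_C_def by blast

lemma embedding_zero: "\<iota> 0 = 0"
  using scalar_field unfolding R_or_C_def by blast

lemma inner_scale_add_left: "g (scale a u + v) w = a * g u w + g v w"
  using inner_product unfolding is_inner_product_def by blast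

lemma inner_conj: "\<iota> (g u v) = cnj (\<iota> (g v u))"
  using inner_product unfolding is_inner_product_def by blast

lemma inner_add_left: "g (u + v) w = g u w + g v w"
  using inner_scale_add_left[of 1 u v w] by simp

lemma inner_zero_left [simp]: "g 0 w = 0"
  using inner_add_left[of 0 0 w] by (simp only: add_0 add_cancel_right_right)

lemma inner_scale_left: "g (scale a u) w = a * g u w"
  using inner_scale_add_left[of a u 0 w] by simp

lemma inner_diff_left: "g (u - v) w = g u w - g v w"
  using inner_add_left[of "u - v" v w] by (simp add: eq_diff_eq)

lemma inner_add_right: "g u (v + w) = g u v + g u w"
proof -
  have "\<iota> (g u (v + w)) = \<iota> (g u v + g u w)"
    by (simp add: inner_conj[of u] inner_add_left embedding_add)
  then show ?thesis by (simp only: embedding_eq_iff)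
qed

lemma inner_zero_right [simp]: "g u 0 = 0"
  using inner_add_right[of u 0 0] by (simp only: add_0 add_cancel_right_right)

lemma inner_eq_zero_commute: "g u v = 0 \<longleftrightarrow> g v u = 0"
proof -
  have "g v u = 0" if "g u v = 0" for u v
  proof -
    have "\<iota> (g v u) = \<iota> 0" using inner_conj[of v u] that by (simp add: embedding_zero)
    then show ?thesis by (simp only: embedding_eq_iff)
  qed
  then show ?thesis by blast
qed

lemma inner_self_eq_zero:
  assumes "g v v = 0"
  shows "v = 0"
proof (rule ccontr)
  assume "v \<noteq> 0"
  then have "Re (\<iota> (g v v)) > 0" using inner_product unfolding is_inner_product_def by blast
  then show False using assms by (simp add: embedding_zero)
qed

lemma inner_scale_right_eq_zero:
  assumes "g u x = 0"
  shows "g u (scale c x) = 0"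
proof -
  have "g (scale c x) u = 0" using assms inner_eq_zero_commute[of u x] by (simp add: inner_scale_left)
  then show ?thesis using inner_eq_zero_commute[of u "scale c x"] by simp
qed

lemma subspace_orth: "subspace (orth g U)"
  unfolding subspace_def orth_def by (simp add: inner_add_right inner_scale_right_eq_zero)

lemma orth_span: "orth g (span B) = orth g B"
proof
  show "orth g (span B) \<subseteq> orth g B" using span_superset by (rule orth_antimono)
next
  show "orth g B \<subseteq> orth g (span B)"
  proof
    fix e assume "e \<in> orth g B"
    then have "B \<subseteq> orth g {e}"
      unfolding orth_def using inner_eq_zero_commute[of _ e] by blast
    then have "span B \<subseteq> orth g {e}" using subspace_orth by (rule span_minimal)
    then show "e \<in> orth g (span B)"
      unfolding orth_def using inner_eq_zero_commute[of _ e] by blast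
  qed
qed

text \<open>Gram--Schmidt step: the residual \<open>b'\<close> of the new generator \<open>x\<close> is orthogonal to \<open>span B\<close>,
  so removing from the residual \<open>b\<close> of \<open>v\<close> its component along \<open>b'\<close> makes it orthogonal to \<open>x\<close>
  as well.\<close>

lemma orthogonal_projection_span:
  assumes "finite B"
  shows "\<exists>a\<in>span B. v - a \<in> orth g (span B)"
  using assms
proof (induction B arbitrary: v rule: finite_induct)
  case empty
  then show ?case by (auto simp: orth_def)
next
  case (insert x B)
  obtain a where a: "a \<in> span B" "v - a \<in> orth g (span B)" using insert.IH by blast
  obtain a' where a': "a' \<in> span B" "x - a' \<in> orth g (span B)" using insert.IH by blast
  define b where "b = v - a"
  define b' where "b' = x - a'"
  show ?case
  proof (cases "b' = 0")
    case True
    then have "span (insert x B) = span B" using a'(1) unfolding b'_def by (simp add: span_redundant)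
    then show ?thesis using a by auto
  next
    case False
    define c where "c = g b b' / g b' b'"
    have b'_nonzero: "g b' b' \<noteq> 0" using False inner_self_eq_zero by blast
    have b'_span: "b' \<in> span (insert x B)"
      unfolding b'_def using a'(1) span_mono[of B "insert x B"]
      by (intro span_diff) (auto intro: span_base)
    have "a + scale c b' \<in> span (insert x B)"
      using a(1) span_mono[of B "insert x B"] b'_span by (auto intro: span_add span_scale)
    moreover have "g (b - scale c b') w = 0" if "w \<in> insert b' (span B)" for w
    proof (cases "w = b'")
      case True
      then show ?thesis using b'_nonzero
        unfolding c_def by (simp add: inner_diff_left inner_scale_left)
    next
      case False
      then have "g b w = 0" "g b' w = 0"
        using that a(2) a'(2) unfolding b_def b'_def orth_def by (auto simp: inner_eq_zero_commute)
      then show ?thesis by (simp add: inner_diff_left inner_scale_left)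
    qed
    then have "g (b - scale c b') w = 0" if "w \<in> insert x B" for w
      using that a'(1) span_base[of _ B] inner_add_right[of "b - scale c b'" a' b']
      unfolding b'_def by auto
    then have "b - scale c b' \<in> orth g (insert x B)"
      unfolding orth_def by (auto simp: inner_eq_zero_commute)
    moreover have "v - (a + scale c b') = b - scale c b'" unfolding b_def by (simp add: diff_diff_eq)
    ultimately show ?thesis unfolding orth_span by metis
  qed
qed

lemma orthogonal_projection:
  assumes "\<exists>B. finite B \<and> span B = UNIV" "subspace U"
  shows "\<exists>a\<in>U. v - a \<in> orth g U"
proof -
  obtain B0 where B0: "finite B0" "span B0 = UNIV" using assms(1) by blast
  obtain B where B: "B \<subseteq> U" "independent B" "U \<subseteq> span B"
    using maximal_independent_subset by blast
  have "finite B" using independent_span_bound[OF B0(1) B(2)] B0(2) by blast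
  moreover have "span B = U" using B span_minimal[OF B(1) assms(2)] by blast
  ultimately show ?thesis using orthogonal_projection_span[of B v] by (simp only:)
qed

end

locale invariant_direct_sum = inner_product_space scale \<iota> g
  for scale :: "'k::field \<Rightarrow> 'v::ab_group_add \<Rightarrow> 'v" and \<iota> g +
  fixes f :: "'v \<Rightarrow> 'v" and H :: "'i \<Rightarrow> 'v set" and I :: "'i set"
  assumes linear_f: "Vector_Spaces.linear scale scale f"
    and finite_dimensional: "\<exists>B. finite B \<and> span B = UNIV"
    and finite_index: "finite I"
    and invariant: "\<And>i. i \<in> I \<Longrightarrow> f ` H i \<subseteq> H i"
    and direct_sum: "internal_direct_sum scale I H"
begin

sublocale f: Vector_Spaces.linear scale scale f by (rule linear_f)

lemma subspace_component: "i \<in> I \<Longrightarrow> subspace (H i)"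
  using direct_sum unfolding internal_direct_sum_def by blast

lemma sum_components: obtains h where "h \<in> (\<Pi>\<^sub>E i\<in>I. H i)" "x = sum h I"
  using direct_sum unfolding internal_direct_sum_def by blast

lemma subspace_image_component: "i \<in> I \<Longrightarrow> subspace (f ` H i)"
  using subspace_component by (rule f.subspace_image)

lemma subspace_range: "subspace (range f)"
  using subspace_UNIV by (rule f.subspace_image)

lemma range_eq_sumset_images: "range f = sumset I (\<lambda>i. f ` H i)"
proof
  show "range f \<subseteq> sumset I (\<lambda>i. f ` H i)"
  proof
    fix y assume "y \<in> range f"
    then obtain x where y: "y = f x" by blast
    obtain h where h: "h \<in> (\<Pi>\<^sub>E i\<in>I. H i)" "x = sum h I" by (rule sum_components)
    have "y = (\<Sum>i\<in>I. f (h i))" unfolding y h(2) by (rule f.sum)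
    also have "\<dots> \<in> sumset I (\<lambda>i. f ` H i)" by (rule sum_in_sumset) (use h(1) in auto)
    finally show "y \<in> sumset I (\<lambda>i. f ` H i)" .
  qed
next
  show "sumset I (\<lambda>i. f ` H i) \<subseteq> range f"
    using subspace_range by (rule sumset_subset_subspace) blast
qed

lemma local_orth_subset_orth_range_iff:
  assumes "i \<in> I"
  shows "orth_in g (H i) (f ` H i) \<subseteq> orth g (range f)
    \<longleftrightarrow> orth_in g (H i) (f ` H i) \<subseteq> orth g (sumset (I - {i}) (\<lambda>j. f ` H j))"
proof
  assume orth_range: "orth_in g (H i) (f ` H i) \<subseteq> orth g (range f)"
  have "sumset (I - {i}) (\<lambda>j. f ` H j) \<subseteq> range f"
    using subspace_range by (rule sumset_subset_subspace) blast
  then show "orth_in g (H i) (f ` H i) \<subseteq> orth g (sumset (I - {i}) (\<lambda>j. f ` H j))"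
    using orth_range orth_antimono by blast
next
  assume orth_rest: "orth_in g (H i) (f ` H i) \<subseteq> orth g (sumset (I - {i}) (\<lambda>j. f ` H j))"
  show "orth_in g (H i) (f ` H i) \<subseteq> orth g (range f)"
  proof
    fix v assume v: "v \<in> orth_in g (H i) (f ` H i)"
    have "g y v = 0" if "y \<in> range f" for y
    proof -
      have "y \<in> sumset I (\<lambda>j. f ` H j)" using that range_eq_sumset_images by blast
      then obtain a b where ab: "a \<in> f ` H i" "b \<in> sumset (I - {i}) (\<lambda>j. f ` H j)" "y = a + b"
        using sumset_split[OF finite_index assms] by blast
      have "g a v = 0" using v ab(1) unfolding orth_in_def by blast
      moreover have "g b v = 0" using orth_rest v ab(2) unfolding orth_def by blast
      ultimately show ?thesis unfolding ab(3) by (simp add: inner_add_left)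
    qed
    then show "v \<in> orth g (range f)" unfolding orth_def by blast
  qed
qed

lemma local_orthogonal_decomposition:
  assumes "i \<in> I" "x \<in> H i"
  obtains a where "a \<in> f ` H i" "x - a \<in> orth_in g (H i) (f ` H i)"
proof -
  obtain a where a: "a \<in> f ` H i" "x - a \<in> orth g (f ` H i)"
    using orthogonal_projection[OF finite_dimensional subspace_image_component[OF assms(1)]] by blast
  have "a \<in> H i" using a(1) invariant[OF assms(1)] by blast
  then have "x - a \<in> H i" using subspace_diff[OF subspace_component[OF assms(1)] assms(2)] by blast
  then show thesis using that a unfolding orth_def orth_in_def by blast
qed

lemma zero_in_local_orth: "i \<in> I \<Longrightarrow> 0 \<in> orth_in g (H i) (f ` H i)"
  using subspace_0[OF subspace_component] unfolding orth_in_def by simp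

lemma sumset_local_orth_subset_orth_range:
  assumes "\<forall>i\<in>I. orth_in g (H i) (f ` H i) \<subseteq> orth g (range f)"
  shows "sumset I (\<lambda>i. orth_in g (H i) (f ` H i)) \<subseteq> orth g (range f)"
  using subspace_orth by (rule sumset_subset_subspace) (use assms in blast)

lemma orth_range_subset_sumset_local_orth:
  assumes local_orth: "\<forall>i\<in>I. orth_in g (H i) (f ` H i) \<subseteq> orth g (range f)"
  shows "orth g (range f) \<subseteq> sumset I (\<lambda>i. orth_in g (H i) (f ` H i))"
proof
  fix e assume e: "e \<in> orth g (range f)"
  obtain h where h: "h \<in> (\<Pi>\<^sub>E i\<in>I. H i)" "e = sum h I" by (rule sum_components)
  have "\<forall>i\<in>I. \<exists>a. a \<in> f ` H i \<and> h i - a \<in> orth_in g (H i) (f ` H i)"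
    using local_orthogonal_decomposition h(1) by (metis PiE_mem)
  then obtain a where a: "\<forall>i\<in>I. a i \<in> f ` H i \<and> h i - a i \<in> orth_in g (H i) (f ` H i)"
    by (rule bchoice[elim_format]) blast
  then have a_image: "\<And>i. i \<in> I \<Longrightarrow> a i \<in> f ` H i"
    and a_orth: "\<And>i. i \<in> I \<Longrightarrow> h i - a i \<in> orth_in g (H i) (f ` H i)"
    by simp_all
  define b where "b = (\<Sum>i\<in>I. h i - a i)"
  have b_sumset: "b \<in> sumset I (\<lambda>i. orth_in g (H i) (f ` H i))"
    unfolding b_def by (rule sum_in_sumset[OF a_orth])
  then have b_orth: "b \<in> orth g (range f)"
    using sumset_local_orth_subset_orth_range[OF local_orth] by blast
  have a_range: "sum a I \<in> range f"
    unfolding range_eq_sumset_images by (rule sum_in_sumset[OF a_image])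
  have e_split: "e = sum a I + b" unfolding h(2) b_def by (simp add: sum_subtractf)
  have "g (sum a I) e = 0" "g (sum a I) b = 0"
    using a_range e b_orth unfolding orth_def by blast+
  then have "g (sum a I) (sum a I) = 0"
    using e_split inner_add_right[of "sum a I" "sum a I" b] by simp
  then have "sum a I = 0" by (rule inner_self_eq_zero)
  then show "e \<in> sumset I (\<lambda>i. orth_in g (H i) (f ` H i))"
    unfolding e_split using b_sumset by (simp only: add_0)
qed

lemma sumset_local_orth_eq_orth_range_iff:
  "sumset I (\<lambda>i. orth_in g (H i) (f ` H i)) = orth g (range f)
    \<longleftrightarrow> (\<forall>i\<in>I. orth_in g (H i) (f ` H i) \<subseteq> orth g (range f))"
proof
  assume eq: "sumset I (\<lambda>i. orth_in g (H i) (f ` H i)) = orth g (range f)"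
  show "\<forall>i\<in>I. orth_in g (H i) (f ` H i) \<subseteq> orth g (range f)"
  proof (intro ballI subsetI)
    fix i v assume "i \<in> I" "v \<in> orth_in g (H i) (f ` H i)"
    then have "v \<in> sumset I (\<lambda>i. orth_in g (H i) (f ` H i))"
      using zero_in_local_orth by (rule member_sumset_single[OF finite_index])
    then show "v \<in> orth g (range f)" unfolding eq .
  qed
next
  assume local_orth: "\<forall>i\<in>I. orth_in g (H i) (f ` H i) \<subseteq> orth g (range f)"
  show "sumset I (\<lambda>i. orth_in g (H i) (f ` H i)) = orth g (range f)"
    using sumset_local_orth_subset_orth_range[OF local_orth]
      orth_range_subset_sumset_local_orth[OF local_orth] by (rule antisym)
qed

end

theorem lemma3p7:
  fixes \<iota> :: "'k::field \<Rightarrow> complex"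
    and scale :: "'k \<Rightarrow> 'v::ab_group_add \<Rightarrow> 'v"
    and g :: "'v \<Rightarrow> 'v \<Rightarrow> 'k"
    and f :: "'v \<Rightarrow> 'v"
    and n :: nat
    and H :: "nat \<Rightarrow> 'v set"
  assumes k: "R_or_C \<iota>"
    and vs: "vector_space scale"
    and fin: "\<exists>B. finite B \<and> module.span scale B = UNIV"
    and ip: "is_inner_product \<iota> scale g"
    and lin: "Vector_Spaces.linear scale scale f"
    and inv: "\<forall>i\<in>{1..n}. f ` H i \<subseteq> H i"
    and dsum: "internal_direct_sum scale {1..n} H"
  shows "sumset {1..n} (\<lambda>i. orth_in g (H i) (f ` H i)) = orth g (range f)
     \<longleftrightarrow> (\<forall>i\<in>{1..n}. orth_in g (H i) (f ` H i)
              \<subseteq> orth g (sumset ({1..n} - {i}) (\<lambda>j. f ` H j)))"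
proof -
  interpret invariant_direct_sum scale \<iota> g f H "{1..n}"
    using k vs fin ip lin inv dsum
    by (simp add: invariant_direct_sum_def invariant_direct_sum_axioms_def
        inner_product_space_def inner_product_space_axioms_def)
  show ?thesis
    unfolding sumset_local_orth_eq_orth_range_iff
    by (rule ball_cong[OF refl local_orth_subset_orth_range_iff])
qed

end
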